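(* Let $\mathcal P$ be a finite collection of prototiles. If the tiling system $\sigma:T(\mathcal P)\to T(\mathcal P)$ has a point of period $2$ (a point $x$ with $\sigma^2x=x\ne\sigma x$), then it has at least two fixed points.
   Context: A prototile is a finite nonempty subset of $\mathbb Z$ with minimum $0$. For a finite collection $\mathcal P=\{P_1,\dots,P_K\}$ of prototiles, a tiling of $\mathbb Z$ by $\mathcal P$ is an expression $\mathbb Z=\bigcup_j(t_j+P_{k_j})$ as a disjoint union of translates of prototiles; it corresponds to the point $x\in\{1,\dots,K\}^{\mathbb Z}$ with $x_i=k$ iff $i\in t_j+P_{k_j}$ for some $j$ with $k_j=k$. $T(\mathcal P)$ is the set of all such points and $\sigma$ is the shift $(\sigma x)_i=x_{i+1}$; $\sigma:T(\mathcal P)\to T(\mathcal P)$ is called a tiling system. *)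

theory Defs
  imports Main
begin

definition prototile :: "int set \<Rightarrow> bool" where
  "prototile A \<longleftrightarrow> finite A \<and> A \<noteq> {} \<and> Min A = 0"

definition translate :: "int \<Rightarrow> int set \<Rightarrow> int set" where
  "translate t A = (\<lambda>s. t + s) ` A"

text \<open>The collection of prototiles is given as P 1, ..., P K.
  A tiling is a set Tl of placed tiles (t, k), meaning the translate t + P k,
  such that every integer lies in exactly one placed tile (disjoint cover of Z).
  The associated point x : Z -> {1..K} labels each integer by the index of
  the prototile of the tile containing it.\<close>
definition tiling_points :: "nat \<Rightarrow> (nat \<Rightarrow> int set) \<Rightarrow> (int \<Rightarrow> nat) set" where
  "tiling_points K P = {x. \<exists>Tl. (\<forall>p\<in>Tl. snd p \<in> {1..K}) \<and>
      (\<forall>i::int. \<exists>!p. p \<in> Tl \<and> i \<in> translate (fst p) (P (snd p))) \<and>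
      (\<forall>i::int. \<forall>p\<in>Tl. i \<in> translate (fst p) (P (snd p)) \<longrightarrow> x i = snd p)}"

definition shift :: "(int \<Rightarrow> nat) \<Rightarrow> (int \<Rightarrow> nat)" where
  "shift x = (\<lambda>i. x (i + 1))"

end

theory Submission
  imports Defs
begin

text \<open>A point of period 2 that is not fixed alternates between two distinct labels a and b.
  Every tile carrying label a then consists of integers of a single parity, and the a-tiles
  together with their translates by 1 tile \<open>\<int>\<close>; this tiling yields the constant point a.
  Likewise for b, giving two distinct fixed points.\<close>

lemma periodic_eq_mod:
  fixes x :: "int \<Rightarrow> 'a"
  assumes periodic: "\<And>i. x (i + m) = x i"
  shows "x i = x (i mod m)"
proof -
  have "x (r + m * n) = x r" for r n
  proof (induction n arbitrary: r rule: int_induct[where k = 0])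
    case base
    show ?case by simp
  next
    case (step1 n)
    have "x (r + m * n + m) = x (r + m * n)" by (rule periodic)
    then show ?case using step1.IH by (simp add: algebra_simps)
  next
    case (step2 n)
    have "x (r + m * (n - 1) + m) = x (r + m * (n - 1))" by (rule periodic)
    then show ?case using step2.IH by (simp add: algebra_simps)
  qed
  from this[of "i mod m" "i div m"] show ?thesis by simp
qed

lemma shift_shift_eq_imp_periodic:
  assumes "shift (shift x) = x"
  shows "x (i + 2) = x i"
  using fun_cong[OF assms, of i] by (simp add: shift_def add.assoc)

lemma shift_const [simp]: "shift (\<lambda>_. k) = (\<lambda>_. k)"
  by (simp add: shift_def)

text \<open>Every k-tile lies in the residue class, so spreading each k-tile over its translates
  by 0, ..., m - 1 covers every integer exactly once.\<close>

lemma const_in_tiling_points_of_residue_class: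
  assumes xT: "x \<in> tiling_points K P" and "0 < m"
    and level_set: "\<And>i. x i = k \<longleftrightarrow> i mod m = c mod m"
  shows "(\<lambda>_. k) \<in> tiling_points K P"
proof -
  obtain Tl where labels: "\<forall>p\<in>Tl. snd p \<in> {1..K}"
    and cover: "\<forall>i. \<exists>!p. p \<in> Tl \<and> i \<in> translate (fst p) (P (snd p))"
    and labelling: "\<forall>i. \<forall>p\<in>Tl. i \<in> translate (fst p) (P (snd p)) \<longrightarrow> x i = snd p"
    using xT unfolding tiling_points_def by blast
  have tile_in_class: "(t + q) mod m = c mod m" if "(t, k) \<in> Tl" "q \<in> P k" for t q
    using labelling that level_set unfolding translate_def by fastforce
  define Tl' where "Tl' = {(t + d, k) | t d. (t, k) \<in> Tl \<and> 0 \<le> d \<and> d < m}"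
  have cover': "\<exists>!p. p \<in> Tl' \<and> i \<in> translate (fst p) (P (snd p))" for i
  proof -
    define d where "d = (i - c) mod m"
    have d: "0 \<le> d" "d < m" using \<open>0 < m\<close> by (simp_all add: d_def)
    have "(i - d) mod m = c mod m" by (simp add: d_def mod_diff_eq mod_diff_right_eq)
    obtain p where p: "p \<in> Tl" "i - d \<in> translate (fst p) (P (snd p))" using cover by blast
    with labelling level_set \<open>(i - d) mod m = c mod m\<close> obtain t where p_eq: "p = (t, k)"
      by (metis prod.collapse)
    show ?thesis
    proof (rule ex1I[of _ "(t + d, k)"])
      show "(t + d, k) \<in> Tl' \<and> i \<in> translate (fst (t + d, k)) (P (snd (t + d, k)))"
        using p p_eq d unfolding Tl'_def translate_def by force
    next
      fix p' assume p': "p' \<in> Tl' \<and> i \<in> translate (fst p') (P (snd p'))"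
      then obtain t' d' q where t': "p' = (t' + d', k)" "(t', k) \<in> Tl" "0 \<le> d'" "d' < m"
        and q: "q \<in> P k" "i = t' + d' + q"
        unfolding Tl'_def translate_def by auto
      have "d' = d"
        using tile_in_class[OF t'(2) q(1)] t'(3,4) q(2) unfolding d_def
        by (metis add.commute add_diff_cancel_left' diff_diff_eq2 mod_diff_cong mod_pos_pos_trivial)
      then have "i - d \<in> translate (fst (t', k)) (P (snd (t', k)))"
        using q unfolding translate_def by force
      with cover p t'(2) have "(t', k) = p" by blast
      then show "p' = (t + d, k)" using t'(1) \<open>d' = d\<close> p_eq by simp
    qed
  qed
  have "\<forall>p\<in>Tl'. snd p \<in> {1..K}" using labels unfolding Tl'_def by force
  moreover have "\<forall>p\<in>Tl'. snd p = k" unfolding Tl'_def by auto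
  ultimately show ?thesis unfolding tiling_points_def
    by (intro CollectI exI[of _ Tl'] conjI allI cover') auto
qed

theorem mainTheorem5:
  fixes K :: nat and P :: "nat \<Rightarrow> int set" and x :: "int \<Rightarrow> nat"
  assumes protos: "\<forall>k\<in>{1..K}. prototile (P k)"
    and xT: "x \<in> tiling_points K P"
    and per2: "shift (shift x) = x"
    and notfix: "shift x \<noteq> x"
  shows "\<exists>y z. y \<in> tiling_points K P \<and> z \<in> tiling_points K P \<and> y \<noteq> z
           \<and> shift y = y \<and> shift z = z"
proof -
  have x_mod: "x i = x (i mod 2)" for i
    using periodic_eq_mod shift_shift_eq_imp_periodic[OF per2] by blast
  have parity: "i mod 2 = 0 \<or> i mod 2 = 1" for i :: int by auto
  have "x 0 \<noteq> x 1"
  proof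
    assume "x 0 = x 1"
    then have const: "x i = x 0" for i using x_mod[of i] parity[of i] by auto
    have "shift x = x"
    proof
      show "shift x i = x i" for i using const[of i] const[of "i + 1"] by (simp add: shift_def)
    qed
    with notfix show False ..
  qed
  then have "x i = x c \<longleftrightarrow> i mod 2 = c mod 2" for i c
    using x_mod[of i] x_mod[of c] parity[of i] parity[of c] by auto
  then have "(\<lambda>_. x c) \<in> tiling_points K P" for c
    by (intro const_in_tiling_points_of_residue_class[OF xT, of 2]) simp_all
  with \<open>x 0 \<noteq> x 1\<close> show ?thesis
    by (intro exI[of _ "\<lambda>_. x 0"] exI[of _ "\<lambda>_. x 1"]) (simp add: fun_eq_iff)
qed

end
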